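(* Let $R$ be a schematic semi-graded ring and $M$ an LSG $R$-module. Then the module of quotients $Q(M)$, with the semi-graduation described below, is $T$-closed in $\mathsf{LSG}\text{-}R$: for every LSG $R$-module $N$, every SG submodule $N'$ of $N$ with $N/N'$ torsion, and every homogeneous $R$-homomorphism $N'\to Q(M)$, there is a unique homogeneous $R$-homomorphism $N\to Q(M)$ extending it.
   Context: Rings are associative with $1$; modules are left modules. A ring $R$ is semi-graded (SG) if there are additive subgroups $R_n$ ($n\in\mathbb{Z}$) with $R=\bigoplus_n R_n$, $R_mR_n\subseteq\bigoplus_{k\le m+n}R_k$, and $1\in R_0$; positively SG if $R_n=0$ for $n<0$. An $R$-module $M$ is SG if $M=\bigoplus_nM_n$ with $R_mM_n\subseteq\bigoplus_{k\le m+n}M_k$ for $m\ge0$; homomorphisms are homogeneous if they preserve degrees; an SG submodule is a submodule $N$ with $N=\bigoplus_n(N\cap M_n)$. Let $R'_n=\{r\in R_n: rh\in R_{n+m}\ \forall m,\forall h\in R_m\}$, $R''_n=\{r\in R'_n: hr\in R_{n+m}\ \forall m,\forall h\in R_m\}$, $R'=\bigcup R'_n$, $R''=\bigcup R''_n$. $M$ is LSG if $R'_nM_m\subseteq M_{n+m}$ for all $n,m$; $\mathsf{LSG}\text{-}R$ is the category of LSG modules with homogeneous homomorphisms. A left Ore set $S$ is good if $S\subseteq R''$ and for $s\in S$, $r\in R'$ there are $u\in R'$, $v\in S$ with $us=vr$. For positively SG $R$, $R_{\ge t}$ is the intersection of all two-sided ideals that are SG submodules containing $\bigoplus_{k\ge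 t}R_k$. $m\in M$ is torsion if $(R_{\ge t})^nm=0$ for some $n,t\ge0$; $T(M)$ is the set of torsion elements. $R$ is schematic if it is positively SG, left Noetherian, and there is a finite set $I$ of good left Ore sets $S$ with $S\cap\bigoplus_{k\ge1}R_k\ne\emptyset$ such that for each $(x_S)\in\prod_{S\in I}S$ there are $t,m$ with $(R_{\ge t})^m\subseteq\sum_{S\in I}Rx_S$. $Q(M)$ is the module of quotients of $M$ with respect to this torsion theory (Goldman/Gabriel localization): an $R$-module containing $M'=M/T(M)$, $T$-torsion-free and $T$-injective in the category of all $R$-modules, with $Q(M)/M'$ torsion. Its semi-graduation: $\xi\in Q(M)$ is homogeneous of degree $k$ iff there exist $n,t\in\mathbb{N}$ with $(R_{\ge n})^t\xi\subseteq M'$ and, for every homogeneous $s\in(R_{\ge n})^t\cap R'$, $s\xi$ is homogeneous of degree $k+\deg s$ in $M'$ (with $M'$ carrying the semi-graduation of $M/T(M)$); with it $Q(M)$ is an LSG $R$-module. *)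

theory Defs
  imports Main
begin

definition add_subgroup :: "'a::ab_group_add set \<Rightarrow> bool" where
  "add_subgroup A \<longleftrightarrow> 0 \<in> A \<and> (\<forall>x\<in>A. \<forall>y\<in>A. x + y \<in> A) \<and> (\<forall>x\<in>A. - x \<in> A)"

definition add_span :: "'a::ab_group_add set \<Rightarrow> 'a set" where
  "add_span A = {sum_list xs | xs. set xs \<subseteq> A}"

definition graded_span :: "(int \<Rightarrow> 'a::ab_group_add set) \<Rightarrow> (int \<Rightarrow> bool) \<Rightarrow> 'a set" where
  "graded_span G P = {x. \<exists>F c. finite F \<and> (\<forall>k\<in>F. P k \<and> c k \<in> G k) \<and> x = sum c F}"

definition direct_grading :: "'a::ab_group_add set \<Rightarrow> (int \<Rightarrow> 'a set) \<Rightarrow> bool" where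
  "direct_grading C G \<longleftrightarrow> (\<forall>n. add_subgroup (G n) \<and> G n \<subseteq> C) \<and>
     (\<forall>x\<in>C. \<exists>!c. finite {n. c n \<noteq> 0} \<and> (\<forall>n. c n \<in> G n) \<and> x = sum c {n. c n \<noteq> 0})"

definition sg_ring :: "(int \<Rightarrow> 'r::ring_1 set) \<Rightarrow> bool" where
  "sg_ring Rg \<longleftrightarrow> direct_grading UNIV Rg \<and>
     (\<forall>m n. \<forall>a\<in>Rg m. \<forall>b\<in>Rg n. a * b \<in> graded_span Rg (\<lambda>k. k \<le> m + n)) \<and> 1 \<in> Rg 0"

definition pos_sg_ring :: "(int \<Rightarrow> 'r::ring_1 set) \<Rightarrow> bool" where
  "pos_sg_ring Rg \<longleftrightarrow> sg_ring Rg \<and> (\<forall>n<0. Rg n = {0})"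

definition Rp :: "(int \<Rightarrow> 'r::ring_1 set) \<Rightarrow> int \<Rightarrow> 'r set" where
  "Rp Rg n = {r \<in> Rg n. \<forall>m. \<forall>h\<in>Rg m. r * h \<in> Rg (n + m)}"

definition Rpp :: "(int \<Rightarrow> 'r::ring_1 set) \<Rightarrow> int \<Rightarrow> 'r set" where
  "Rpp Rg n = {r \<in> Rp Rg n. \<forall>m. \<forall>h\<in>Rg m. h * r \<in> Rg (n + m)}"

definition Rp_all :: "(int \<Rightarrow> 'r::ring_1 set) \<Rightarrow> 'r set" where
  "Rp_all Rg = (\<Union>n. Rp Rg n)"

definition Rpp_all :: "(int \<Rightarrow> 'r::ring_1 set) \<Rightarrow> 'r set" where
  "Rpp_all Rg = (\<Union>n. Rpp Rg n)"

definition left_ideal :: "'r::ring_1 set \<Rightarrow> bool" where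
  "left_ideal I \<longleftrightarrow> add_subgroup I \<and> (\<forall>r. \<forall>a\<in>I. r * a \<in> I)"

definition two_sided_ideal :: "'r::ring_1 set \<Rightarrow> bool" where
  "two_sided_ideal I \<longleftrightarrow> add_subgroup I \<and> (\<forall>r. \<forall>a\<in>I. r * a \<in> I \<and> a * r \<in> I)"

definition sg_subset :: "(int \<Rightarrow> 'a::ab_group_add set) \<Rightarrow> 'a set \<Rightarrow> bool" where
  "sg_subset G N \<longleftrightarrow> (\<forall>x\<in>N. x \<in> graded_span (\<lambda>k. N \<inter> G k) (\<lambda>_. True))"

definition Rge :: "(int \<Rightarrow> 'r::ring_1 set) \<Rightarrow> nat \<Rightarrow> 'r set" where
  "Rge Rg t = \<Inter> {I. two_sided_ideal I \<and> sg_subset Rg I \<and> graded_span Rg (\<lambda>k. k \<ge> int t) \<subseteq> I}"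

definition set_prod :: "'r::ring_1 set \<Rightarrow> 'r set \<Rightarrow> 'r set" where
  "set_prod A B = add_span {a * b | a b. a \<in> A \<and> b \<in> B}"

primrec ideal_pow :: "'r::ring_1 set \<Rightarrow> nat \<Rightarrow> 'r set" where
  "ideal_pow I 0 = UNIV"
| "ideal_pow I (Suc n) = set_prod I (ideal_pow I n)"

definition lmodule :: "'a::ab_group_add set \<Rightarrow> ('r::ring_1 \<Rightarrow> 'a \<Rightarrow> 'a) \<Rightarrow> bool" where
  "lmodule C act \<longleftrightarrow> add_subgroup C \<and> (\<forall>r. \<forall>x\<in>C. act r x \<in> C) \<and>
     (\<forall>r s. \<forall>x\<in>C. act (r + s) x = act r x + act s x) \<and>
     (\<forall>r. \<forall>x\<in>C. \<forall>y\<in>C. act r (x + y) = act r x + act r y) \<and>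
     (\<forall>r s. \<forall>x\<in>C. act (r * s) x = act r (act s x)) \<and> (\<forall>x\<in>C. act 1 x = x)"

definition submodule :: "'a::ab_group_add set \<Rightarrow> ('r::ring_1 \<Rightarrow> 'a \<Rightarrow> 'a) \<Rightarrow> 'a set \<Rightarrow> bool" where
  "submodule C act N \<longleftrightarrow> N \<subseteq> C \<and> add_subgroup N \<and> (\<forall>r. \<forall>x\<in>N. act r x \<in> N)"

definition sg_module :: "(int \<Rightarrow> 'r::ring_1 set) \<Rightarrow> 'a::ab_group_add set \<Rightarrow> ('r \<Rightarrow> 'a \<Rightarrow> 'a)
    \<Rightarrow> (int \<Rightarrow> 'a set) \<Rightarrow> bool" where
  "sg_module Rg C act G \<longleftrightarrow> lmodule C act \<and> direct_grading C G \<and>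
     (\<forall>m\<ge>0. \<forall>n. \<forall>r\<in>Rg m. \<forall>x\<in>G n. act r x \<in> graded_span G (\<lambda>k. k \<le> m + n))"

definition lsg_module :: "(int \<Rightarrow> 'r::ring_1 set) \<Rightarrow> 'a::ab_group_add set \<Rightarrow> ('r \<Rightarrow> 'a \<Rightarrow> 'a)
    \<Rightarrow> (int \<Rightarrow> 'a set) \<Rightarrow> bool" where
  "lsg_module Rg C act G \<longleftrightarrow> sg_module Rg C act G \<and>
     (\<forall>n m. \<forall>r\<in>Rp Rg n. \<forall>x\<in>G m. act r x \<in> G (n + m))"

definition sg_submodule :: "'a::ab_group_add set \<Rightarrow> ('r::ring_1 \<Rightarrow> 'a \<Rightarrow> 'a) \<Rightarrow> (int \<Rightarrow> 'a set)
    \<Rightarrow> 'a set \<Rightarrow> bool" where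
  "sg_submodule C act G N \<longleftrightarrow> submodule C act N \<and> sg_subset G N"

definition is_hom :: "'a::ab_group_add set \<Rightarrow> ('r::ring_1 \<Rightarrow> 'a \<Rightarrow> 'a) \<Rightarrow> 'b::ab_group_add set
    \<Rightarrow> ('r \<Rightarrow> 'b \<Rightarrow> 'b) \<Rightarrow> ('a \<Rightarrow> 'b) \<Rightarrow> bool" where
  "is_hom C act C' act' f \<longleftrightarrow> (\<forall>x\<in>C. f x \<in> C') \<and> (\<forall>x\<in>C. \<forall>y\<in>C. f (x + y) = f x + f y) \<and>
     (\<forall>r. \<forall>x\<in>C. f (act r x) = act' r (f x))"

definition homogeneous_map :: "'a set \<Rightarrow> (int \<Rightarrow> 'a set) \<Rightarrow> (int \<Rightarrow> 'b set) \<Rightarrow> ('a \<Rightarrow> 'b) \<Rightarrow> bool" where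
  "homogeneous_map C G G' f \<longleftrightarrow> (\<forall>n. \<forall>x\<in>C \<inter> G n. f x \<in> G' n)"

definition torsion_elem :: "(int \<Rightarrow> 'r::ring_1 set) \<Rightarrow> ('r \<Rightarrow> 'a::ab_group_add \<Rightarrow> 'a) \<Rightarrow> 'a \<Rightarrow> bool" where
  "torsion_elem Rg act x \<longleftrightarrow> (\<exists>n t. \<forall>a\<in>ideal_pow (Rge Rg t) n. act a x = 0)"

text \<open>x is torsion modulo the submodule N, i.e. its class in C/N is torsion.\<close>
definition torsion_mod :: "(int \<Rightarrow> 'r::ring_1 set) \<Rightarrow> ('r \<Rightarrow> 'a::ab_group_add \<Rightarrow> 'a) \<Rightarrow> 'a set \<Rightarrow> 'a \<Rightarrow> bool" where
  "torsion_mod Rg act N x \<longleftrightarrow> (\<exists>n t. \<forall>a\<in>ideal_pow (Rge Rg t) n. act a x \<in> N)"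

definition left_ore_set :: "'r::ring_1 set \<Rightarrow> bool" where
  "left_ore_set S \<longleftrightarrow> 1 \<in> S \<and> 0 \<notin> S \<and> (\<forall>s\<in>S. \<forall>s'\<in>S. s * s' \<in> S) \<and>
     (\<forall>s\<in>S. \<forall>r. \<exists>u v. v \<in> S \<and> u * s = v * r)"

definition good_ore_set :: "(int \<Rightarrow> 'r::ring_1 set) \<Rightarrow> 'r set \<Rightarrow> bool" where
  "good_ore_set Rg S \<longleftrightarrow> left_ore_set S \<and> S \<subseteq> Rpp_all Rg \<and>
     (\<forall>s\<in>S. \<forall>r\<in>Rp_all Rg. \<exists>u\<in>Rp_all Rg. \<exists>v\<in>S. u * s = v * r)"

definition schematic :: "(int \<Rightarrow> 'r::ring_1 set) \<Rightarrow> bool" where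
  "schematic Rg \<longleftrightarrow> pos_sg_ring Rg \<and>
     (\<forall>I :: nat \<Rightarrow> 'r set. (\<forall>i. left_ideal (I i)) \<and> (\<forall>i. I i \<subseteq> I (Suc i))
         \<longrightarrow> (\<exists>n. \<forall>m\<ge>n. I m = I n)) \<and>
     (\<exists>\<I> :: 'r set set. finite \<I> \<and>
        (\<forall>S\<in>\<I>. good_ore_set Rg S \<and> S \<inter> graded_span Rg (\<lambda>k. k \<ge> 1) \<noteq> {}) \<and>
        (\<forall>x :: 'r set \<Rightarrow> 'r. (\<forall>S\<in>\<I>. x S \<in> S) \<longrightarrow>
           (\<exists>t m. ideal_pow (Rge Rg t) m \<subseteq> {\<Sum>S\<in>\<I>. r S * x S | r. True})))"

text \<open>T-injectivity of (Qc, Qact) with respect to all R-modules whose carrier lives in the type 'n.\<close>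
definition T_injective :: "'n::ab_group_add itself \<Rightarrow> (int \<Rightarrow> 'r::ring_1 set) \<Rightarrow> 'q::ab_group_add set
    \<Rightarrow> ('r \<Rightarrow> 'q \<Rightarrow> 'q) \<Rightarrow> bool" where
  "T_injective (_ :: 'n itself) Rg Qc Qact \<longleftrightarrow>
     (\<forall>(C :: 'n set) act N f. lmodule C act \<and> submodule C act N \<and> (\<forall>x\<in>C. torsion_mod Rg act N x)
        \<and> is_hom N act Qc Qact f \<longrightarrow> (\<exists>g. is_hom C act Qc Qact g \<and> (\<forall>x\<in>N. g x = f x)))"

text \<open>(Qc, Qact) together with iota is a module of quotients of (Mc, Mact): iota induces an
  embedding of M' = M/T(M) into Q; Q is torsion-free, T-injective, and Q/M' is torsion.\<close>
definition module_of_quotients :: "'n::ab_group_add itself \<Rightarrow> (int \<Rightarrow> 'r::ring_1 set)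
    \<Rightarrow> 'm::ab_group_add set \<Rightarrow> ('r \<Rightarrow> 'm \<Rightarrow> 'm) \<Rightarrow> 'q::ab_group_add set \<Rightarrow> ('r \<Rightarrow> 'q \<Rightarrow> 'q)
    \<Rightarrow> ('m \<Rightarrow> 'q) \<Rightarrow> bool" where
  "module_of_quotients tn Rg Mc Mact Qc Qact iota \<longleftrightarrow>
     lmodule Qc Qact \<and> is_hom Mc Mact Qc Qact iota \<and>
     (\<forall>x\<in>Mc. iota x = 0 \<longleftrightarrow> torsion_elem Rg Mact x) \<and>
     (\<forall>\<xi>\<in>Qc. torsion_elem Rg Qact \<xi> \<longrightarrow> \<xi> = 0) \<and>
     T_injective tn Rg Qc Qact \<and>
     (\<forall>\<xi>\<in>Qc. torsion_mod Rg Qact (iota ` Mc) \<xi>)"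

text \<open>The semi-graduation of Q(M): component of degree k. M' carries the grading
  (M')_j = iota ` (M_j) induced from M.\<close>
definition Q_grading :: "(int \<Rightarrow> 'r::ring_1 set) \<Rightarrow> 'm::ab_group_add set \<Rightarrow> (int \<Rightarrow> 'm set)
    \<Rightarrow> 'q::ab_group_add set \<Rightarrow> ('r \<Rightarrow> 'q \<Rightarrow> 'q) \<Rightarrow> ('m \<Rightarrow> 'q) \<Rightarrow> int \<Rightarrow> 'q set" where
  "Q_grading Rg Mc Mg Qc Qact iota k = {\<xi> \<in> Qc. \<exists>n t.
      (\<forall>a\<in>ideal_pow (Rge Rg n) t. Qact a \<xi> \<in> iota ` Mc) \<and>
      (\<forall>d. \<forall>s\<in>ideal_pow (Rge Rg n) t \<inter> Rp Rg d. Qact s \<xi> \<in> iota ` Mg (k + d))}"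

end

theory Submission
  imports Defs
begin

text \<open>Existence of the extension g is the T-injectivity of Q(M) and uniqueness is its
  T-torsion-freeness, so the content is that g is homogeneous. For x of degree n in N, every
  homogeneous s in R' lying deep enough in the R_{>=t}-adic filtration maps x into N', in degree
  n + deg s, so s g(x) = f(s x) lies in M' and is homogeneous of degree n + deg s in Q(M).
  It remains to see that an element iota m of M' which is homogeneous of degree k in Q(M) is
  homogeneous of degree k in M'. Write m as the sum of its components c_j. For each good Ore
  set S of the schematic cover, a suitable s in S moves iota m into degree k + deg s of M', so
  s m differs from a homogeneous element by torsion; a torsion sum of homogeneous elements of
  distinct degrees is killed componentwise by an element of S, hence m - c_k is annihilated by
  an element of every S, and the covering property makes it torsion.\<close>

lemma add_subgroup_sum: "add_subgroup A \<Longrightarrow> (\<And>i. i \<in> F \<Longrightarrow> w i \<in> A) \<Longrightarrow> sum w F \<in> A"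
  by (induction F rule: infinite_finite_induct) (auto simp: add_subgroup_def)

lemma add_subgroup_diff: "add_subgroup A \<Longrightarrow> x \<in> A \<Longrightarrow> y \<in> A \<Longrightarrow> x - y \<in> A"
  unfolding add_subgroup_def by (metis diff_conv_add_uminus)

lemma lmodule_zero: "lmodule C act \<Longrightarrow> 0 \<in> C"
  unfolding lmodule_def add_subgroup_def by blast

lemma lmodule_uminus: "lmodule C act \<Longrightarrow> x \<in> C \<Longrightarrow> - x \<in> C"
  unfolding lmodule_def add_subgroup_def by blast

lemma lmodule_diff: "lmodule C act \<Longrightarrow> x \<in> C \<Longrightarrow> y \<in> C \<Longrightarrow> x - y \<in> C"
  unfolding lmodule_def using add_subgroup_diff by blast

lemma lmodule_sum: "lmodule C act \<Longrightarrow> (\<And>i. i \<in> F \<Longrightarrow> w i \<in> C) \<Longrightarrow> sum w F \<in> C"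
  unfolding lmodule_def using add_subgroup_sum by blast

lemma lmodule_act: "lmodule C act \<Longrightarrow> x \<in> C \<Longrightarrow> act r x \<in> C"
  unfolding lmodule_def by blast

lemma lmodule_act_mult: "lmodule C act \<Longrightarrow> x \<in> C \<Longrightarrow> act (r * s) x = act r (act s x)"
  unfolding lmodule_def by blast

lemma lmodule_act_0_left:
  assumes "lmodule C act" "x \<in> C"
  shows "act 0 x = 0"
proof -
  have "act (0 + 0) x = act 0 x + act 0 x" using assms unfolding lmodule_def by blast
  then show ?thesis by simp
qed

lemma lmodule_act_0_right:
  assumes "lmodule C act"
  shows "act r 0 = 0"
proof -
  have "act r (0 + 0) = act r 0 + act r 0"
    using assms lmodule_zero[OF assms] unfolding lmodule_def by blast
  then show ?thesis by simp
qed

lemma lmodule_act_sum_left: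
  "lmodule C act \<Longrightarrow> x \<in> C \<Longrightarrow> act (sum h A) x = (\<Sum>i\<in>A. act (h i) x)"
  by (induction A rule: infinite_finite_induct) (auto simp: lmodule_act_0_left lmodule_def)

lemma lmodule_act_sum_right:
  assumes "lmodule C act" "\<And>i. i \<in> A \<Longrightarrow> w i \<in> C"
  shows "act r (sum w A) = (\<Sum>i\<in>A. act r (w i))"
  using assms
proof (induction A rule: infinite_finite_induct)
  case (insert i A)
  then have "sum w A \<in> C" using lmodule_sum by blast
  with insert show ?case by (simp add: lmodule_def)
qed (simp_all add: lmodule_act_0_right)

lemma lmodule_act_diff:
  assumes lm: "lmodule C act" and x: "x \<in> C" and y: "y \<in> C"
  shows "act r (x - y) = act r x - act r y"
proof -
  have ny: "- y \<in> C" using lmodule_uminus[OF lm y] .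
  have "act r (y + - y) = act r y + act r (- y)"
    using lm y ny unfolding lmodule_def by blast
  then have "act r (- y) = - act r y"
    using lmodule_act_0_right[OF lm] by (simp add: add_eq_0_iff)
  moreover have "act r (x + - y) = act r x + act r (- y)"
    using lm x ny unfolding lmodule_def by blast
  ultimately show ?thesis by simp
qed

lemma is_hom_act: "is_hom C act C' act' f \<Longrightarrow> x \<in> C \<Longrightarrow> f (act r x) = act' r (f x)"
  unfolding is_hom_def by blast

lemma is_hom_closed: "is_hom C act C' act' f \<Longrightarrow> x \<in> C \<Longrightarrow> f x \<in> C'"
  unfolding is_hom_def by blast

lemma is_hom_diff:
  assumes f: "is_hom C act C' act' f" and lm: "lmodule C act" and x: "x \<in> C" and y: "y \<in> C"
  shows "f (x - y) = f x - f y"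
proof -
  have "f (x - y + y) = f (x - y) + f y"
    using f lmodule_diff[OF lm x y] y unfolding is_hom_def by blast
  then show ?thesis by (simp add: eq_diff_eq)
qed

lemma direct_grading_sum_eq_0:
  assumes dg: "direct_grading C G" and F: "finite F" and deg: "inj_on deg F"
    and w: "\<And>j. j \<in> F \<Longrightarrow> w j \<in> G (deg j)" and sum0: "sum w F = 0" and j: "j \<in> F"
  shows "w j = 0"
proof -
  have G0: "0 \<in> G n" for n
    using dg unfolding direct_grading_def add_subgroup_def by blast
  then have "0 \<in> C" using dg unfolding direct_grading_def by blast
  then have uniq: "\<exists>!c. finite {n. c n \<noteq> 0} \<and> (\<forall>n. c n \<in> G n) \<and> 0 = sum c {n. c n \<noteq> 0}"
    using dg unfolding direct_grading_def by blast
  define c where "c n = (if n \<in> deg ` F then w (inv_into F deg n) else 0)" for n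
  have c_deg: "c (deg i) = w i" if "i \<in> F" for i
    using that deg by (simp add: c_def)
  have supp: "{n. c n \<noteq> 0} \<subseteq> deg ` F"
    unfolding c_def by auto
  have "sum c {n. c n \<noteq> 0} = sum c (deg ` F)"
    using supp F by (intro sum.mono_neutral_left) auto
  also have "\<dots> = sum w F"
    using deg c_deg by (simp add: sum.reindex)
  finally have "sum c {n. c n \<noteq> 0} = 0" using sum0 by simp
  moreover have "c n \<in> G n" for n
    using c_deg w G0 by (cases "n \<in> deg ` F") (auto simp: c_def)
  moreover have "finite {n. c n \<noteq> 0}"
    using supp F finite_subset by blast
  ultimately have "c = (\<lambda>_. 0)"
    using uniq G0 by auto
  then show ?thesis using c_deg[OF j] by simp
qed

lemma direct_grading_homogeneous_degree:
  assumes dg: "direct_grading C G" and x: "x \<in> G d" "x \<noteq> 0" and span: "x \<in> graded_span G P"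
  shows "P d"
proof (rule ccontr)
  assume not_P: "\<not> P d"
  obtain F c where F: "finite F" and c: "\<forall>k\<in>F. P k \<and> c k \<in> G k" and xc: "x = sum c F"
    using span unfolding graded_span_def by blast
  have dF: "d \<notin> F" using c not_P by auto
  define w where "w = c(d := - x)"
  have "- x \<in> G d" using dg x unfolding direct_grading_def add_subgroup_def by blast
  then have wG: "w j \<in> G (id j)" if "j \<in> insert d F" for j
    using that c dF by (auto simp: w_def)
  have "sum w F = x"
    using dF xc by (auto simp: w_def intro: sum.cong)
  then have "sum w (insert d F) = 0"
    using F dF by (simp add: w_def)
  then have "w d = 0"
    using direct_grading_sum_eq_0[OF dg finite.insertI[OF F] inj_on_id wG] by blast
  then show False using x(2) by (simp add: w_def)
qed

lemma set_prod_mono: "A \<subseteq> A' \<Longrightarrow> B \<subseteq> B' \<Longrightarrow> set_prod A B \<subseteq> set_prod A' B'"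
  unfolding set_prod_def add_span_def by blast

lemma ideal_pow_mono: "I \<subseteq> J \<Longrightarrow> ideal_pow I n \<subseteq> ideal_pow J n"
  by (induction n) (simp_all add: set_prod_mono)

lemma ideal_pow_antimono: "n \<le> n' \<Longrightarrow> ideal_pow I n' \<subseteq> ideal_pow I n"
proof -
  have "ideal_pow I (Suc n) \<subseteq> ideal_pow I n" for n
    by (induction n) (simp_all add: set_prod_mono)
  then show "n \<le> n' \<Longrightarrow> ideal_pow I n' \<subseteq> ideal_pow I n"
    using lift_Suc_antimono_le[of "ideal_pow I"] by blast
qed

lemma Rge_antimono: "t \<le> t' \<Longrightarrow> Rge Rg t' \<subseteq> Rge Rg t"
proof -
  assume "t \<le> t'"
  then have "graded_span Rg (\<lambda>k. k \<ge> int t') \<subseteq> graded_span Rg (\<lambda>k. k \<ge> int t)"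
    unfolding graded_span_def by fastforce
  then show ?thesis unfolding Rge_def by blast
qed

lemma ideal_pow_Rge_antimono:
  "t \<le> t' \<Longrightarrow> n \<le> n' \<Longrightarrow> ideal_pow (Rge Rg t') n' \<subseteq> ideal_pow (Rge Rg t) n"
  using ideal_pow_antimono ideal_pow_mono[OF Rge_antimono] by blast

lemma in_add_span: "a \<in> A \<Longrightarrow> a \<in> add_span A"
  unfolding add_span_def by (intro CollectI exI[of _ "[a]"]) simp

lemma power_in_ideal_pow: "u \<in> I \<Longrightarrow> u ^ n \<in> ideal_pow I n"
  by (induction n) (auto simp: set_prod_def intro: in_add_span)

lemma homogeneous_in_Rge: "x \<in> Rg e \<Longrightarrow> int t \<le> e \<Longrightarrow> x \<in> Rge Rg t"
proof -
  assume "x \<in> Rg e" "int t \<le> e"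
  then have "x \<in> graded_span Rg (\<lambda>k. k \<ge> int t)"
    unfolding graded_span_def by (intro CollectI exI[of _ "{e}"] exI[of _ "\<lambda>_. x"]) auto
  then show ?thesis unfolding Rge_def by blast
qed

lemma Rp_power: "s \<in> Rp Rg d \<Longrightarrow> 1 \<in> Rg 0 \<Longrightarrow> s ^ n \<in> Rp Rg (int n * d)"
proof (induction n)
  case (Suc n)
  then have "s * s ^ n \<in> Rg (d + int n * d)"
    and "\<forall>m. \<forall>h\<in>Rg m. s * s ^ n * h \<in> Rg (d + int n * d + m)"
    unfolding Rp_def by (auto simp: mult.assoc add.assoc)
  moreover have "int (Suc n) * d = d + int n * d" by (simp add: algebra_simps)
  ultimately show ?case unfolding Rp_def by simp
qed (simp add: Rp_def)

section \<open>Good Ore sets of a schematic ring\<close>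

lemma left_ore_set_power: "left_ore_set S \<Longrightarrow> s \<in> S \<Longrightarrow> s ^ n \<in> S"
  by (induction n) (auto simp: left_ore_set_def)

text \<open>A power of an element of positive degree lies in R' and arbitrarily deep in the
  R_{>=t}-adic filtration.\<close>
lemma good_ore_set_meets_ideal_pow_Rge:
  assumes sg: "sg_ring Rg" and good: "good_ore_set Rg S"
    and pos: "S \<inter> graded_span Rg (\<lambda>k. k \<ge> 1) \<noteq> {}"
  shows "\<exists>\<tau> D. \<tau> \<in> S \<and> \<tau> \<in> Rp Rg D \<and> \<tau> \<in> ideal_pow (Rge Rg n) t"
proof -
  obtain s where sS: "s \<in> S" and s_pos: "s \<in> graded_span Rg (\<lambda>k. k \<ge> 1)" using pos by blast
  have ore: "left_ore_set S" using good unfolding good_ore_set_def by blast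
  then have "s \<noteq> 0" using sS unfolding left_ore_set_def by blast
  obtain d where sRp: "s \<in> Rp Rg d"
    using good sS unfolding good_ore_set_def Rpp_all_def Rpp_def by blast
  have dg: "direct_grading UNIV Rg" and one: "1 \<in> Rg 0" using sg unfolding sg_ring_def by auto
  have "d \<ge> 1"
    using direct_grading_homogeneous_degree[OF dg _ \<open>s \<noteq> 0\<close> s_pos] sRp unfolding Rp_def by blast
  then have "int n \<le> int n * d" by (simp add: mult_le_cancel_left1)
  moreover have "s ^ n \<in> Rg (int n * d)" using Rp_power[OF sRp one] unfolding Rp_def by blast
  ultimately have "(s ^ n) ^ t \<in> ideal_pow (Rge Rg n) t"
    by (intro power_in_ideal_pow homogeneous_in_Rge)
  moreover have "(s ^ n) ^ t \<in> Rp Rg (int t * (int n * d))"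
    using Rp_power[OF Rp_power[OF sRp one] one] .
  moreover have "(s ^ n) ^ t \<in> S" using left_ore_set_power[OF ore left_ore_set_power[OF ore sS]] .
  ultimately show ?thesis by blast
qed

text \<open>The family of Ore sets from the definition of a schematic ring.\<close>
definition ore_cover :: "(int \<Rightarrow> 'r::ring_1 set) \<Rightarrow> 'r set set \<Rightarrow> bool" where
  "ore_cover Rg \<I> \<longleftrightarrow> (\<forall>S\<in>\<I>. good_ore_set Rg S \<and> S \<inter> graded_span Rg (\<lambda>k. k \<ge> 1) \<noteq> {}) \<and>
     (\<forall>x :: 'r set \<Rightarrow> 'r. (\<forall>S\<in>\<I>. x S \<in> S) \<longrightarrow>
        (\<exists>t m. ideal_pow (Rge Rg t) m \<subseteq> {\<Sum>S\<in>\<I>. r S * x S | r. True}))"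

lemma schematic_ore_cover: "schematic Rg \<Longrightarrow> \<exists>\<I>. ore_cover Rg \<I>"
  unfolding schematic_def ore_cover_def by (elim conjE exE) (intro exI conjI)

lemma ore_cover_torsion_elem:
  assumes cover: "ore_cover Rg \<I>" and lm: "lmodule C act" and y: "y \<in> C"
    and kill: "\<forall>S\<in>\<I>. \<exists>\<sigma>\<in>S. act \<sigma> y = 0"
  shows "torsion_elem Rg act y"
proof -
  obtain x where x: "\<forall>S\<in>\<I>. x S \<in> S \<and> act (x S) y = 0"
    using kill by metis
  then obtain t m where tm: "ideal_pow (Rge Rg t) m \<subseteq> {\<Sum>S\<in>\<I>. r S * x S | r. True}"
    using cover unfolding ore_cover_def by blast
  have "act a y = 0" if a_pow: "a \<in> ideal_pow (Rge Rg t) m" for a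
  proof -
    obtain r where a: "a = (\<Sum>S\<in>\<I>. r S * x S)" using tm a_pow by blast
    have "act a y = (\<Sum>S\<in>\<I>. act (r S * x S) y)"
      unfolding a by (rule lmodule_act_sum_left[OF lm y])
    also have "\<dots> = (\<Sum>S\<in>\<I>. act (r S) (act (x S) y))"
      using lmodule_act_mult[OF lm y] by simp
    also have "\<dots> = 0" using x lmodule_act_0_right[OF lm] by simp
    finally show ?thesis .
  qed
  then show ?thesis unfolding torsion_elem_def by blast
qed

section \<open>Homogeneous elements of Q(M) inside M'\<close>

text \<open>An element of S of large degree in R' kills the torsion sum; since it maps the
  summands to pairwise distinct degrees, it kills each of them.\<close>
lemma torsion_sum_annihilated_componentwise:
  assumes sg: "sg_ring Rg" and lsg: "lsg_module Rg Mc Mact Mg"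
    and good: "good_ore_set Rg S" and pos: "S \<inter> graded_span Rg (\<lambda>k. k \<ge> 1) \<noteq> {}"
    and F: "finite F" and deg: "inj_on deg F" and w: "\<And>j. j \<in> F \<Longrightarrow> w j \<in> Mg (deg j)"
    and tor: "torsion_elem Rg Mact (sum w F)"
  shows "\<exists>\<tau>\<in>S. \<forall>j\<in>F. Mact \<tau> (w j) = 0"
proof -
  have lm: "lmodule Mc Mact" and dg: "direct_grading Mc Mg"
    and act: "\<forall>n m. \<forall>r\<in>Rp Rg n. \<forall>x\<in>Mg m. Mact r x \<in> Mg (n + m)"
    using lsg unfolding lsg_module_def sg_module_def by auto
  obtain n t where nt: "\<forall>a\<in>ideal_pow (Rge Rg t) n. Mact a (sum w F) = 0"
    using tor unfolding torsion_elem_def by blast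
  obtain \<tau> D where \<tau>: "\<tau> \<in> S" "\<tau> \<in> Rp Rg D" "\<tau> \<in> ideal_pow (Rge Rg t) n"
    using good_ore_set_meets_ideal_pow_Rge[OF sg good pos] by blast
  have wM: "w j \<in> Mc" if "j \<in> F" for j
    using w[OF that] dg unfolding direct_grading_def by blast
  have "(\<Sum>j\<in>F. Mact \<tau> (w j)) = Mact \<tau> (sum w F)"
    using lmodule_act_sum_right[OF lm, of F w] wM by simp
  also have "\<dots> = 0" using nt \<tau>(3) by blast
  finally have "(\<Sum>j\<in>F. Mact \<tau> (w j)) = 0" .
  moreover have "Mact \<tau> (w j) \<in> Mg (D + deg j)" if "j \<in> F" for j
    using act \<tau>(2) w[OF that] by blast
  moreover have "inj_on (\<lambda>j. D + deg j) F"
    using deg by (simp add: inj_on_def)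
  ultimately have "\<forall>j\<in>F. Mact \<tau> (w j) = 0"
    using direct_grading_sum_eq_0[OF dg F, of "\<lambda>j. D + deg j" "\<lambda>j. Mact \<tau> (w j)"] by blast
  then show ?thesis using \<tau>(1) by blast
qed

text \<open>A suitable \<sigma> in S sends iota m to some iota y with y of degree k + deg \<sigma>. The torsion
  element \<sigma> m - y has the components \<sigma> c_j (j \<noteq> k) and \<sigma> c_k - y, all of which
  some \<tau> in S kills; then \<tau> \<sigma> kills every c_j with j \<noteq> k.\<close>
lemma ore_set_annihilates_off_degree_components:
  assumes sg: "sg_ring Rg" and lsg: "lsg_module Rg Mc Mact Mg"
    and mq: "module_of_quotients tn Rg Mc Mact Qc Qact iota"
    and good: "good_ore_set Rg S" and pos: "S \<inter> graded_span Rg (\<lambda>k. k \<ge> 1) \<noteq> {}"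
    and F: "finite F" and kF: "k \<in> F" and c: "\<And>j. c j \<in> Mg j"
    and hom: "iota (sum c F) \<in> Q_grading Rg Mc Mg Qc Qact iota k"
  shows "\<exists>\<rho>\<in>S. Mact \<rho> (sum c (F - {k})) = 0"
proof -
  have lm: "lmodule Mc Mact" and dg: "direct_grading Mc Mg"
    and act: "\<forall>n m. \<forall>r\<in>Rp Rg n. \<forall>x\<in>Mg m. Mact r x \<in> Mg (n + m)"
    using lsg unfolding lsg_module_def sg_module_def by auto
  have Mg_sub: "Mg n \<subseteq> Mc" and Mg_grp: "add_subgroup (Mg n)" for n
    using dg unfolding direct_grading_def by blast+
  have iota: "is_hom Mc Mact Qc Qact iota" and tz: "\<forall>x\<in>Mc. iota x = 0 \<longleftrightarrow> torsion_elem Rg Mact x"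
    using mq unfolding module_of_quotients_def by blast+
  have cM: "c j \<in> Mc" for j using c Mg_sub by blast
  define m where "m = sum c F"
  have m: "m \<in> Mc" unfolding m_def using cM by (simp add: lmodule_sum[OF lm])
  obtain n t where hom_nt: "\<forall>d. \<forall>s\<in>ideal_pow (Rge Rg n) t \<inter> Rp Rg d. Qact s (iota m) \<in> iota ` Mg (k + d)"
    using hom unfolding Q_grading_def m_def by blast
  obtain \<sigma> D where \<sigma>: "\<sigma> \<in> S" "\<sigma> \<in> Rp Rg D" "\<sigma> \<in> ideal_pow (Rge Rg n) t"
    using good_ore_set_meets_ideal_pow_Rge[OF sg good pos] by blast
  obtain y where y: "y \<in> Mg (k + D)" and \<sigma>m: "Qact \<sigma> (iota m) = iota y"
    using hom_nt \<sigma> by blast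
  have yM: "y \<in> Mc" using y Mg_sub by blast
  have "iota (Mact \<sigma> m - y) = 0"
    using \<sigma>m is_hom_act[OF iota m] is_hom_diff[OF iota lm lmodule_act[OF lm m] yM] by simp
  then have tor: "torsion_elem Rg Mact (Mact \<sigma> m - y)"
    using tz lmodule_diff[OF lm lmodule_act[OF lm m] yM] by blast
  define w where "w j = Mact \<sigma> (c j) - (if j = k then y else 0)" for j
  have "sum w F = (\<Sum>j\<in>F. Mact \<sigma> (c j)) - (\<Sum>j\<in>F. if j = k then y else 0)"
    unfolding w_def by (rule sum_subtractf)
  also have "\<dots> = Mact \<sigma> m - y"
    using F kF lmodule_act_sum_right[OF lm, of F c] cM by (simp add: m_def)
  finally have "torsion_elem Rg Mact (sum w F)" using tor by simp
  moreover have "w j \<in> Mg (D + j)" for j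
  proof -
    have "Mact \<sigma> (c j) \<in> Mg (D + j)" using act \<sigma>(2) c by blast
    moreover have "y \<in> Mg (D + k)" using y by (simp add: add.commute)
    ultimately show ?thesis
      using add_subgroup_diff[OF Mg_grp] by (cases "j = k") (simp_all add: w_def)
  qed
  ultimately obtain \<tau> where \<tau>: "\<tau> \<in> S" "\<forall>j\<in>F. Mact \<tau> (w j) = 0"
    using torsion_sum_annihilated_componentwise[OF sg lsg good pos F, of "(+) D" w] by auto
  have \<tau>\<sigma>: "\<tau> * \<sigma> \<in> S"
    using \<tau>(1) \<sigma>(1) good unfolding good_ore_set_def left_ore_set_def by blast
  have "sum c (F - {k}) \<in> Mc" using cM by (simp add: lmodule_sum[OF lm])
  then have "Mact (\<tau> * \<sigma>) (sum c (F - {k})) = Mact \<tau> (Mact \<sigma> (sum c (F - {k})))"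
    by (rule lmodule_act_mult[OF lm])
  also have "\<dots> = Mact \<tau> (\<Sum>j\<in>F - {k}. Mact \<sigma> (c j))"
    using lmodule_act_sum_right[OF lm, of "F - {k}" c] cM by simp
  also have "\<dots> = (\<Sum>j\<in>F - {k}. Mact \<tau> (Mact \<sigma> (c j)))"
    using lmodule_act_sum_right[OF lm, of "F - {k}" "\<lambda>j. Mact \<sigma> (c j)"] lmodule_act[OF lm cM] by simp
  also have "\<dots> = 0"
  proof (intro sum.neutral ballI)
    fix j assume j: "j \<in> F - {k}"
    then have "w j = Mact \<sigma> (c j)" by (simp add: w_def)
    then show "Mact \<tau> (Mact \<sigma> (c j)) = 0" using \<tau>(2) j by auto
  qed
  finally show ?thesis using \<tau>\<sigma> by blast
qed

lemma Q_grading_image_subset: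
  assumes sch: "schematic Rg" and lsg: "lsg_module Rg Mc Mact Mg"
    and mq: "module_of_quotients tn Rg Mc Mact Qc Qact iota"
  shows "iota ` Mc \<inter> Q_grading Rg Mc Mg Qc Qact iota k \<subseteq> iota ` Mg k"
proof
  fix \<eta> assume \<eta>: "\<eta> \<in> iota ` Mc \<inter> Q_grading Rg Mc Mg Qc Qact iota k"
  have sg: "sg_ring Rg" using sch by (simp add: schematic_def pos_sg_ring_def)
  obtain \<I> where cover: "ore_cover Rg \<I>" using schematic_ore_cover[OF sch] by blast
  have lm: "lmodule Mc Mact" and dg: "direct_grading Mc Mg"
    using lsg unfolding lsg_module_def sg_module_def by auto
  have iota: "is_hom Mc Mact Qc Qact iota" and tz: "\<forall>x\<in>Mc. iota x = 0 \<longleftrightarrow> torsion_elem Rg Mact x"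
    using mq unfolding module_of_quotients_def by blast+
  obtain m where m: "m \<in> Mc" and \<eta>m: "\<eta> = iota m" using \<eta> by blast
  obtain c where c_fin: "finite {n. c n \<noteq> 0}" and c: "\<And>n. c n \<in> Mg n"
    and mc: "m = sum c {n. c n \<noteq> 0}"
    using dg m unfolding direct_grading_def by blast
  define F where "F = insert k {n. c n \<noteq> 0}"
  have F: "finite F" and kF: "k \<in> F" using c_fin by (simp_all add: F_def)
  have "m = sum c F" unfolding mc F_def using c_fin by (intro sum.mono_neutral_left) auto
  have cM: "c j \<in> Mc" for j using c dg unfolding direct_grading_def by blast
  have "m - c k = sum c (F - {k})" using sum.remove[OF F kF, of c] \<open>m = sum c F\<close> by simp
  moreover have "\<exists>\<rho>\<in>S. Mact \<rho> (sum c (F - {k})) = 0" if "S \<in> \<I>" for S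
  proof (rule ore_set_annihilates_off_degree_components[OF sg lsg mq _ _ F kF c])
    show "good_ore_set Rg S" "S \<inter> graded_span Rg (\<lambda>k. k \<ge> 1) \<noteq> {}"
      using cover that by (simp_all add: ore_cover_def)
    show "iota (sum c F) \<in> Q_grading Rg Mc Mg Qc Qact iota k"
      using \<eta> \<eta>m \<open>m = sum c F\<close> by (metis IntD2)
  qed
  ultimately have "torsion_elem Rg Mact (m - c k)"
    using ore_cover_torsion_elem[OF cover lm lmodule_diff[OF lm m cM], of k] by simp
  then have "iota (m - c k) = 0"
    using tz lmodule_diff[OF lm m cM] by blast
  then have "iota m = iota (c k)"
    using is_hom_diff[OF iota lm m cM] by simp
  then show "\<eta> \<in> iota ` Mg k" using \<eta>m c by blast
qed

section \<open>Extensions of homomorphisms into Q(M)\<close>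

lemma hom_extension_unique:
  assumes lmQ: "lmodule Qc Qact" and tfree: "\<forall>\<xi>\<in>Qc. torsion_elem Rg Qact \<xi> \<longrightarrow> \<xi> = 0"
    and tor: "\<forall>x\<in>Nc. torsion_mod Rg Nact N' x"
    and g1: "is_hom Nc Nact Qc Qact g1" and g2: "is_hom Nc Nact Qc Qact g2"
    and agree: "\<forall>x\<in>N'. g1 x = g2 x" and x: "x \<in> Nc"
  shows "g1 x = g2 x"
proof -
  have q1: "g1 x \<in> Qc" and q2: "g2 x \<in> Qc" using g1 g2 x is_hom_closed by blast+
  obtain n t where nt: "\<forall>a\<in>ideal_pow (Rge Rg t) n. Nact a x \<in> N'"
    using tor x unfolding torsion_mod_def by blast
  have "Qact a (g1 x - g2 x) = 0" if "a \<in> ideal_pow (Rge Rg t) n" for a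
    using nt that agree
    by (simp add: lmodule_act_diff[OF lmQ q1 q2] flip: is_hom_act[OF g1 x] is_hom_act[OF g2 x])
  then have "torsion_elem Rg Qact (g1 x - g2 x)" unfolding torsion_elem_def by blast
  then have "g1 x - g2 x = 0" using tfree lmodule_diff[OF lmQ q1 q2] by blast
  then show ?thesis by simp
qed

lemma hom_extension_homogeneous:
  assumes sch: "schematic Rg" and lsgM: "lsg_module Rg Mc Mact Mg"
    and mq: "module_of_quotients tn Rg Mc Mact Qc Qact iota"
    and lsgN: "lsg_module Rg Nc Nact Ng" and tor: "\<forall>x\<in>Nc. torsion_mod Rg Nact N' x"
    and g: "is_hom Nc Nact Qc Qact g"
    and hom: "homogeneous_map N' Ng (Q_grading Rg Mc Mg Qc Qact iota) g"
  shows "homogeneous_map Nc Ng (Q_grading Rg Mc Mg Qc Qact iota) g"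
  unfolding homogeneous_map_def
proof (intro allI ballI)
  fix n x assume x: "x \<in> Nc \<inter> Ng n"
  have actN: "\<forall>n m. \<forall>r\<in>Rp Rg n. \<forall>x\<in>Ng m. Nact r x \<in> Ng (n + m)"
    using lsgN unfolding lsg_module_def by blast
  have gx: "g x \<in> Qc" using g x is_hom_closed by blast
  obtain n1 t1 where nt1: "\<forall>a\<in>ideal_pow (Rge Rg t1) n1. Nact a x \<in> N'"
    using tor x unfolding torsion_mod_def by blast
  obtain n2 t2 where nt2: "\<forall>a\<in>ideal_pow (Rge Rg t2) n2. Qact a (g x) \<in> iota ` Mc"
    using mq gx unfolding module_of_quotients_def torsion_mod_def by blast
  define I where "I = ideal_pow (Rge Rg (max t1 t2)) (max n1 n2)"
  have I1: "\<forall>a\<in>I. Nact a x \<in> N'" and I2: "\<forall>a\<in>I. Qact a (g x) \<in> iota ` Mc"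
    using nt1 nt2 ideal_pow_Rge_antimono[of _ "max t1 t2" _ "max n1 n2"] unfolding I_def
    by (meson max.cobounded1 max.cobounded2 subsetD)+
  have degrees: "Qact s (g x) \<in> iota ` Mg (n + d)" if s: "s \<in> I \<inter> Rp Rg d" for s d
  proof -
    have "Nact s x \<in> N' \<inter> Ng (d + n)" using I1 actN s x by blast
    then have "g (Nact s x) \<in> Q_grading Rg Mc Mg Qc Qact iota (d + n)"
      using hom unfolding homogeneous_map_def by blast
    then have "Qact s (g x) \<in> Q_grading Rg Mc Mg Qc Qact iota (d + n)"
      using is_hom_act[OF g] x by simp
    then show ?thesis
      using Q_grading_image_subset[OF sch lsgM mq] I2 s by (fastforce simp: add.commute)
  qed
  then show "g x \<in> Q_grading Rg Mc Mg Qc Qact iota n"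
    using gx I2 degrees unfolding Q_grading_def I_def by blast
qed

theorem mainTheorem8:
  fixes Rg :: "int \<Rightarrow> 'r::ring_1 set"
    and Mc :: "'m::ab_group_add set" and Mact :: "'r \<Rightarrow> 'm \<Rightarrow> 'm" and Mg :: "int \<Rightarrow> 'm set"
    and Qc :: "'q::ab_group_add set" and Qact :: "'r \<Rightarrow> 'q \<Rightarrow> 'q" and iota :: "'m \<Rightarrow> 'q"
    and Nc :: "'n::ab_group_add set" and Nact :: "'r \<Rightarrow> 'n \<Rightarrow> 'n" and Ng :: "int \<Rightarrow> 'n set"
    and N' :: "'n set" and f :: "'n \<Rightarrow> 'q"
  assumes "schematic Rg"
    and "lsg_module Rg Mc Mact Mg"
    and "module_of_quotients TYPE('n) Rg Mc Mact Qc Qact iota"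
    and "lsg_module Rg Nc Nact Ng"
    and "sg_submodule Nc Nact Ng N'"
    and "\<forall>x\<in>Nc. torsion_mod Rg Nact N' x"
    and "is_hom N' Nact Qc Qact f"
    and "homogeneous_map N' Ng (Q_grading Rg Mc Mg Qc Qact iota) f"
  shows "(\<exists>g. is_hom Nc Nact Qc Qact g \<and> homogeneous_map Nc Ng (Q_grading Rg Mc Mg Qc Qact iota) g
              \<and> (\<forall>x\<in>N'. g x = f x))
       \<and> (\<forall>g1 g2. is_hom Nc Nact Qc Qact g1 \<and> homogeneous_map Nc Ng (Q_grading Rg Mc Mg Qc Qact iota) g1
              \<and> (\<forall>x\<in>N'. g1 x = f x) \<and>
              is_hom Nc Nact Qc Qact g2 \<and> homogeneous_map Nc Ng (Q_grading Rg Mc Mg Qc Qact iota) g2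
              \<and> (\<forall>x\<in>N'. g2 x = f x) \<longrightarrow> (\<forall>x\<in>Nc. g1 x = g2 x))"
proof -
  have lmN: "lmodule Nc Nact" using assms(4) unfolding lsg_module_def sg_module_def by blast
  have subN: "submodule Nc Nact N'" using assms(5) unfolding sg_submodule_def by blast
  have lmQ: "lmodule Qc Qact" and tfree: "\<forall>\<xi>\<in>Qc. torsion_elem Rg Qact \<xi> \<longrightarrow> \<xi> = 0"
    and inj: "T_injective TYPE('n) Rg Qc Qact"
    using assms(3) unfolding module_of_quotients_def by blast+
  obtain g where g: "is_hom Nc Nact Qc Qact g" and gf: "\<forall>x\<in>N'. g x = f x"
    using inj lmN subN assms(6,7) unfolding T_injective_def by blast
  have "homogeneous_map N' Ng (Q_grading Rg Mc Mg Qc Qact iota) g"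
    using assms(8) gf unfolding homogeneous_map_def by simp
  then have "homogeneous_map Nc Ng (Q_grading Rg Mc Mg Qc Qact iota) g"
    using hom_extension_homogeneous[OF assms(1-4,6) g] by blast
  moreover have "g1 x = g2 x"
    if "is_hom Nc Nact Qc Qact g1" "is_hom Nc Nact Qc Qact g2"
      "\<forall>x\<in>N'. g1 x = f x" "\<forall>x\<in>N'. g2 x = f x" "x \<in> Nc" for g1 g2 :: "'n \<Rightarrow> 'q" and x
    using hom_extension_unique[OF lmQ tfree assms(6)] that by simp
  ultimately show ?thesis using g gf by blast
qed

end
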